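(* Let $\mu,\nu$ be finite Borel measures in metric spaces $X$ and $Y$ respectively, and let $\mu\times\nu$ be the product measure on $X\times Y$ (with the maximum metric). Then (i) $\dim_{\mathrm P}(\mu\times\nu)\ge\dim_{\mathrm P}\mu+\underline{\dim}_{\mathrm P}\nu$; (ii) $\underline{\dim}_{\mathrm P}(\mu\times\nu)\ge\underline{\dim}_{\mathrm P}\mu+\underline{\dim}_{\mathrm P}\nu$.
   Context: For a subset $E$ of a metric space, $N_\delta(E)$ is the minimal cardinality of a cover of $E$ by sets of diameter at most $\delta$; $\underline{\dim}_{\mathrm B}E=\liminf_{\delta\to0}\frac{\log N_\delta(E)}{|\log\delta|}$, $\overline{\dim}_{\mathrm B}E=\limsup_{\delta\to0}\frac{\log N_\delta(E)}{|\log\delta|}$; $\dim_{\mathrm P}E=\inf\{\sup_n\overline{\dim}_{\mathrm B}E_n:E\subseteq\bigcup_nE_n\}$ and $\underline{\dim}_{\mathrm P}E=\inf\{\sup_n\underline{\dim}_{\mathrm B}E_n:E\subseteq\bigcup_nE_n\}$ (countable covers). For a finite Borel measure $\mu$ on a metric space $X$ and $\dim$ either of these dimensions, $\dim\mu=\inf\{\dim E: E\subseteq X\text{ Borel},\ \mu(E)>0\}$. *)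

theory Defs
  imports "HOL-Analysis.Analysis"
begin

text \<open>All notions are parametrised by a distance function d, so that the product
  X \<times> Y can be equipped with the maximum metric.\<close>

definition diam_le :: "('a \<Rightarrow> 'a \<Rightarrow> real) \<Rightarrow> real \<Rightarrow> 'a set \<Rightarrow> bool" where
  "diam_le d \<delta> S \<longleftrightarrow> (\<forall>x\<in>S. \<forall>y\<in>S. d x y \<le> \<delta>)"

text \<open>N_delta(E): minimal cardinality of a cover of E by sets of diameter at most delta
  (infinity if there is no finite such cover).\<close>
definition cover_num :: "('a \<Rightarrow> 'a \<Rightarrow> real) \<Rightarrow> real \<Rightarrow> 'a set \<Rightarrow> ereal" where
  "cover_num d \<delta> E = Inf {ereal (real (card C)) | C. finite C \<and> E \<subseteq> \<Union>C \<and> (\<forall>S\<in>C. diam_le d \<delta> S)}"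

definition box_ratio :: "('a \<Rightarrow> 'a \<Rightarrow> real) \<Rightarrow> 'a set \<Rightarrow> real \<Rightarrow> ereal" where
  "box_ratio d E \<delta> =
     (if cover_num d \<delta> E = \<infinity> then \<infinity>
      else ereal (ln (real_of_ereal (cover_num d \<delta> E)) / \<bar>ln \<delta>\<bar>))"

definition lower_box_dim :: "('a \<Rightarrow> 'a \<Rightarrow> real) \<Rightarrow> 'a set \<Rightarrow> ereal" where
  "lower_box_dim d E = Liminf (at_right 0) (box_ratio d E)"

definition upper_box_dim :: "('a \<Rightarrow> 'a \<Rightarrow> real) \<Rightarrow> 'a set \<Rightarrow> ereal" where
  "upper_box_dim d E = Limsup (at_right 0) (box_ratio d E)"

definition packing_dim :: "('a \<Rightarrow> 'a \<Rightarrow> real) \<Rightarrow> 'a set \<Rightarrow> ereal" where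
  "packing_dim d E = Inf {(SUP n. upper_box_dim d (Es n)) | Es :: nat \<Rightarrow> 'a set. E \<subseteq> (\<Union>n. Es n)}"

definition lower_packing_dim :: "('a \<Rightarrow> 'a \<Rightarrow> real) \<Rightarrow> 'a set \<Rightarrow> ereal" where
  "lower_packing_dim d E = Inf {(SUP n. lower_box_dim d (Es n)) | Es :: nat \<Rightarrow> 'a set. E \<subseteq> (\<Union>n. Es n)}"

text \<open>The measure of a Borel set is taken as the outer measure, which agrees with the measure
  on measurable sets (relevant for the product measure, whose sigma-algebra is the
  product sigma-algebra, possibly smaller than the Borel sets of the product).\<close>
definition measure_dim ::
  "('a set \<Rightarrow> ereal) \<Rightarrow> ('a::topological_space) measure \<Rightarrow> ereal" where
  "measure_dim dimf M = Inf {dimf E | E. E \<in> sets borel \<and> outer_measure_of M E > 0}"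

definition max_dist :: "('a::metric_space \<times> 'b::metric_space) \<Rightarrow> ('a \<times> 'b) \<Rightarrow> real" where
  "max_dist p q = max (dist (fst p) (fst q)) (dist (snd p) (snd q))"

end

theory Submission
  imports Defs
begin

text \<open>
  Let E be a Borel set of positive product measure covered by sets \<open>E n\<close>, and let
  \<open>s < dim \<mu>\<close>, \<open>t < dim \<nu>\<close>. A set that is not totally bounded has infinite box dimensions.
  Otherwise E lies in the closure of a countable set, where Borel sets are product measurable, so
  by Fubini some \<open>G = E \<inter> closure (E n)\<close> contains a set A of positive \<open>\<mu>\<close>-measure all of whose
  sections \<open>G\<^sub>x\<close> have positive \<open>\<nu>\<close>-measure, hence lower box dimension \<open>> t\<close>; by continuity
  from below this holds below a scale that is uniform on A, while A itself has box dimension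
  \<open>> s\<close>. A maximal \<open>\<delta>/2\<close>-separated subset of A together with maximal \<open>\<delta>/2\<close>-separated
  subsets of the sections over it forms a \<open>\<delta>/2\<close>-separated grid in G for the maximum metric,
  whence \<open>N(\<delta>/2, G) \<ge> N(\<delta>, A) \<cdot> min\<^sub>x N(\<delta>, G\<^sub>x) \<ge> \<delta>\<^sup>-\<^sup>s \<delta>\<^sup>-\<^sup>t\<close>, and \<open>E n\<close> has box dimension
  at least \<open>s + t\<close>.
\<close>

section \<open>Covering numbers\<close>

definition separated :: "('a \<Rightarrow> 'a \<Rightarrow> real) \<Rightarrow> real \<Rightarrow> 'a set \<Rightarrow> bool" where
  "separated d r P \<longleftrightarrow> (\<forall>p\<in>P. \<forall>q\<in>P. p \<noteq> q \<longrightarrow> r < d p q)"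

lemma diam_le_mono: "\<delta>1 \<le> \<delta>2 \<Longrightarrow> diam_le d \<delta>1 S \<Longrightarrow> diam_le d \<delta>2 S"
  unfolding diam_le_def by (meson order_trans)

lemma diam_le_cball: "diam_le dist (2 * r) (cball a r)"
  unfolding diam_le_def
proof (intro ballI)
  fix x y assume "x \<in> cball a r" "y \<in> cball a r"
  then have "dist a x \<le> r" "dist a y \<le> r" by simp_all
  then show "dist x y \<le> 2 * r" using dist_triangle3[of x y a] by linarith
qed

lemma cover_num_le_card:
  assumes "finite C" "E \<subseteq> \<Union>C" "\<forall>S\<in>C. diam_le d \<delta> S"
  shows "cover_num d \<delta> E \<le> ereal (real (card C))"
  unfolding cover_num_def by (rule Inf_lower) (use assms in blast)

lemma cover_num_antimono: "\<delta>1 \<le> \<delta>2 \<Longrightarrow> cover_num d \<delta>2 E \<le> cover_num d \<delta>1 E"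
  unfolding cover_num_def by (rule Inf_superset_mono) (blast intro: diam_le_mono)

lemma cover_num_mono: "E \<subseteq> F \<Longrightarrow> cover_num d \<delta> E \<le> cover_num d \<delta> F"
  unfolding cover_num_def by (rule Inf_superset_mono) blast

lemma cover_num_cases: "cover_num d \<delta> E = \<infinity> \<or> (\<exists>n. cover_num d \<delta> E = ereal (real n))"
proof -
  define K where "K = {card C | C. finite C \<and> E \<subseteq> \<Union>C \<and> (\<forall>S\<in>C. diam_le d \<delta> S)}"
  have N: "cover_num d \<delta> E = Inf ((\<lambda>n. ereal (real n)) ` K)"
    unfolding cover_num_def K_def by (rule arg_cong[where f = Inf]) blast
  show ?thesis
  proof (cases "K = {}")
    case True
    then show ?thesis by (simp add: N top_ereal_def)
  next
    case False
    have "Inf ((\<lambda>n. ereal (real n)) ` K) = ereal (real (Inf K))"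
    proof (rule antisym)
      show "Inf ((\<lambda>n. ereal (real n)) ` K) \<le> ereal (real (Inf K))"
        using Inf_nat_def1[OF False] by (intro Inf_lower) simp
      show "ereal (real (Inf K)) \<le> Inf ((\<lambda>n. ereal (real n)) ` K)"
        by (intro Inf_greatest) (auto intro: cInf_lower)
    qed
    then show ?thesis by (simp add: N)
  qed
qed

lemma one_le_cover_num:
  assumes "E \<noteq> {}" shows "1 \<le> cover_num d \<delta> E"
  unfolding cover_num_def
proof (rule Inf_greatest, clarify)
  fix C assume C: "finite C" "E \<subseteq> \<Union>C" "\<forall>S\<in>C. diam_le d \<delta> S"
  then have "C \<noteq> {}" using assms by auto
  then have "card C \<ge> 1" using C(1) by (simp add: Suc_leI card_gt_0_iff)
  then show "1 \<le> ereal (real (card C))" by simp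
qed

lemma card_le_cover_num:
  assumes "finite P" "P \<subseteq> E" "separated d \<delta> P"
  shows "ereal (real (card P)) \<le> cover_num d \<delta> E"
  unfolding cover_num_def
proof (rule Inf_greatest, clarify)
  fix C assume C: "finite C" "E \<subseteq> \<Union>C" "\<forall>S\<in>C. diam_le d \<delta> S"
  have "\<forall>p\<in>P. \<exists>S. S \<in> C \<and> p \<in> S" using C(2) assms(2) by blast
  from bchoice[OF this] obtain f where f: "\<forall>p\<in>P. f p \<in> C \<and> p \<in> f p" by blast
  have "inj_on f P"
  proof (rule inj_onI, rule ccontr)
    fix p q assume pq: "p \<in> P" "q \<in> P" "f p = f q" "p \<noteq> q"
    then have "d p q \<le> \<delta>" using f C(3) unfolding diam_le_def by metis
    moreover have "\<delta> < d p q" using pq assms(3) unfolding separated_def by blast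
    ultimately show False by simp
  qed
  then have "card P \<le> card C" using card_inj_on_le f C(1) by blast
  then show "ereal (real (card P)) \<le> ereal (real (card C))" by simp
qed

lemma cover_num_closure:
  fixes d :: "'x::topological_space \<Rightarrow> 'x \<Rightarrow> real"
  assumes cont: "continuous_on UNIV (\<lambda>p. d (fst p) (snd p))"
  shows "cover_num d \<delta> (closure E) \<le> cover_num d \<delta> E"
  unfolding cover_num_def[of d \<delta> E]
proof (rule Inf_greatest, clarify)
  fix C assume C: "finite C" "E \<subseteq> \<Union>C" "\<forall>S\<in>C. diam_le d \<delta> S"
  have "closed {p. d (fst p) (snd p) \<le> \<delta>}"
    using closed_Collect_le[OF cont continuous_on_const] by simp
  then have diam: "diam_le d \<delta> (closure S)" if "S \<in> C" for S
  proof -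
    have "S \<times> S \<subseteq> {p. d (fst p) (snd p) \<le> \<delta>}"
      using C(3) that unfolding diam_le_def by auto
    then have "closure (S \<times> S) \<subseteq> {p. d (fst p) (snd p) \<le> \<delta>}"
      using \<open>closed _\<close> by (rule closure_minimal)
    then show ?thesis unfolding diam_le_def closure_Times by auto
  qed
  have "closure E \<subseteq> closure (\<Union>C)" using C(2) by (rule closure_mono)
  also have "\<dots> \<subseteq> \<Union>(closure ` C)"
    using C(1) by (intro closure_minimal) (auto intro: closure_subset[THEN subsetD])
  finally have "cover_num d \<delta> (closure E) \<le> ereal (real (card (closure ` C)))"
    using C(1) diam by (intro cover_num_le_card) auto
  also have "\<dots> \<le> ereal (real (card C))" using card_image_le[OF C(1)] by simp
  finally show "cover_num d \<delta> (closure E) \<le> ereal (real (card C))" .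
qed

lemma exists_separated_subset:
  fixes E :: "'a::metric_space set"
  assumes "0 \<le> r" "ereal (real m) \<le> cover_num dist (2 * r) E"
  shows "\<exists>P\<subseteq>E. finite P \<and> card P = m \<and> separated dist r P"
  using assms(2)
proof (induction m)
  case 0
  show ?case by (intro exI[of _ "{}"]) (simp add: separated_def)
next
  case (Suc m)
  have "ereal (real m) \<le> cover_num dist (2 * r) E"
    using Suc.prems by (rule order_trans[rotated]) simp
  then obtain P where P: "P \<subseteq> E" "finite P" "card P = m" "separated dist r P"
    using Suc.IH by blast
  have "\<not> E \<subseteq> \<Union>((\<lambda>p. cball p r) ` P)"
  proof
    assume "E \<subseteq> \<Union>((\<lambda>p. cball p r) ` P)"
    then have "cover_num dist (2 * r) E \<le> ereal (real (card ((\<lambda>p. cball p r) ` P)))"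
      using P(2) diam_le_cball by (intro cover_num_le_card) auto
    also have "\<dots> \<le> ereal (real m)" using card_image_le[OF P(2)] P(3) by simp
    finally have "cover_num dist (2 * r) E \<le> ereal (real m)" .
    with Suc.prems have "ereal (real (Suc m)) \<le> ereal (real m)" by (rule order_trans)
    then show False by simp
  qed
  then obtain x where "x \<in> E" "x \<notin> \<Union>((\<lambda>p. cball p r) ` P)" by blast
  then have x: "x \<in> E" "\<forall>p\<in>P. r < dist p x" by (auto simp: not_le)
  then have "x \<notin> P" using assms(1) by fastforce
  have "separated dist r (insert x P)"
    using P(4) x(2) unfolding separated_def by (metis dist_commute insert_iff)
  then show ?case
    using P x \<open>x \<notin> P\<close> by (intro exI[of _ "insert x P"]) auto
qed

section \<open>Box dimensions\<close>

lemma box_ratio_nat: "cover_num d \<delta> E = ereal (real n) \<Longrightarrow> box_ratio d E \<delta> = ereal (ln n / \<bar>ln \<delta>\<bar>)"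
  unfolding box_ratio_def by simp

lemma ln_of_nat_nonneg: "0 \<le> ln (real n)"
  by (cases n) auto

lemma box_ratio_nonneg: "0 \<le> box_ratio d E \<delta>"
  using cover_num_cases[of d \<delta> E]
  by (auto simp: box_ratio_def ln_of_nat_nonneg)

lemma box_ratio_mono:
  assumes "cover_num d \<delta> E \<le> cover_num d \<delta> F"
  shows "box_ratio d E \<delta> \<le> box_ratio d F \<delta>"
proof -
  consider "cover_num d \<delta> F = \<infinity>"
    | m n where "cover_num d \<delta> E = ereal (real m)" "cover_num d \<delta> F = ereal (real n)"
    using cover_num_cases[of d \<delta> E] cover_num_cases[of d \<delta> F] assms by force
  then show ?thesis
  proof cases
    case 1
    then show ?thesis by (simp add: box_ratio_def)
  next
    case (2 m n)
    then have "m \<le> n" using assms by simp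
    have "ln m \<le> ln n"
    proof (cases "m = 0")
      case False
      then show ?thesis using \<open>m \<le> n\<close> by simp
    qed (simp add: ln_of_nat_nonneg)
    then show ?thesis by (simp add: 2 box_ratio_nat divide_right_mono)
  qed
qed

lemma powr_less_cover_num:
  assumes "0 < \<delta>" "\<delta> < 1" "E \<noteq> {}" "ereal s < box_ratio d E \<delta>"
  shows "ereal (\<delta> powr (-s)) < cover_num d \<delta> E"
proof (cases "cover_num d \<delta> E = \<infinity>")
  case False
  then obtain n where n: "cover_num d \<delta> E = ereal (real n)" using cover_num_cases by blast
  then have "1 \<le> n" using one_le_cover_num[OF assms(3), of d \<delta>] by simp
  have "\<bar>ln \<delta>\<bar> = - ln \<delta>" "0 < - ln \<delta>" using assms(1,2) by auto
  then have "s * (- ln \<delta>) < ln n" using assms(4) by (simp add: n box_ratio_nat field_simps)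
  then have "exp (-s * ln \<delta>) < exp (ln n)" by simp
  then show ?thesis using \<open>1 \<le> n\<close> assms(1) by (simp add: n powr_def)
qed simp

lemma eventually_box_ratio_ge:
  assumes "0 < r" "r < w"
  shows "\<forall>\<^sub>F \<delta> in at_right 0.
    ereal ((2 * \<delta>) powr (-w)) \<le> cover_num d \<delta> E \<longrightarrow> ereal r \<le> box_ratio d E \<delta>"
proof -
  have "\<forall>\<^sub>F \<delta> in at_right 0. ln \<delta> < - (w * ln 2) / (w - r)"
    using ln_at_0 unfolding filterlim_at_bot_dense by (rule spec)
  moreover have "\<forall>\<^sub>F \<delta> in at_right (0::real). 0 < \<delta> \<and> \<delta> < 1"
    by (simp add: eventually_at_right_field) (rule exI[of _ 1], auto)
  ultimately show ?thesis
  proof eventually_elim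
    case (elim \<delta>)
    show ?case
    proof (intro impI, cases "cover_num d \<delta> E = \<infinity>")
      case False
      assume le: "ereal ((2 * \<delta>) powr (-w)) \<le> cover_num d \<delta> E"
      obtain n where n: "cover_num d \<delta> E = ereal (real n)" using False cover_num_cases by blast
      define L where "L = - ln \<delta>"
      have L: "\<bar>ln \<delta>\<bar> = L" "0 < L" using elim(2) unfolding L_def by auto
      have le': "(2 * \<delta>) powr (-w) \<le> n" using le n by simp
      have pos: "0 < (2 * \<delta>) powr (-w)" using elim(2) by simp
      then have "ln ((2 * \<delta>) powr (-w)) \<le> ln n"
        using le' by (simp only: ln_le_cancel_iff[OF pos less_le_trans[OF pos le']])
      then have "w * (L - ln 2) \<le> ln n"
        using elim(2) by (simp add: L_def ln_powr ln_mult algebra_simps)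
      moreover have "w * ln 2 < L * (w - r)" using elim(1) assms(2) by (simp add: L_def field_simps)
      ultimately have "r * L \<le> ln n" by (simp add: algebra_simps)
      then show "ereal r \<le> box_ratio d E \<delta>" using L by (simp add: n box_ratio_nat field_simps)
    qed (simp add: box_ratio_def)
  qed
qed

lemma upper_box_dim_mono:
  "(\<And>\<delta>. 0 < \<delta> \<Longrightarrow> cover_num d \<delta> E \<le> cover_num d \<delta> F) \<Longrightarrow> upper_box_dim d E \<le> upper_box_dim d F"
  unfolding upper_box_dim_def
  by (intro Limsup_mono) (auto simp: eventually_at_right_field intro!: exI[of _ 1] box_ratio_mono)

lemma lower_box_dim_mono:
  "(\<And>\<delta>. 0 < \<delta> \<Longrightarrow> cover_num d \<delta> E \<le> cover_num d \<delta> F) \<Longrightarrow> lower_box_dim d E \<le> lower_box_dim d F"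
  unfolding lower_box_dim_def
  by (intro Liminf_mono) (auto simp: eventually_at_right_field intro!: exI[of _ 1] box_ratio_mono)

lemma lower_box_dim_nonneg: "0 \<le> lower_box_dim d E"
  unfolding lower_box_dim_def by (intro Liminf_bounded always_eventually allI box_ratio_nonneg)

lemma lower_box_dim_le_upper_box_dim: "lower_box_dim d E \<le> upper_box_dim d E"
  unfolding lower_box_dim_def upper_box_dim_def by (intro Liminf_le_Limsup) simp

lemma upper_box_dim_nonneg: "0 \<le> upper_box_dim d E"
  using lower_box_dim_nonneg lower_box_dim_le_upper_box_dim by (rule order_trans)

lemma filtermap_times_at_right_0: "0 < c \<Longrightarrow> filtermap ((*) c) (at_right 0) = at_right (0::real)"
  using filtermap_times_pos_at_right[of c 0] by simp

lemma upper_box_dim_rescale: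
  "0 < c \<Longrightarrow> upper_box_dim d E = Limsup (at_right 0) (\<lambda>\<delta>. box_ratio d E (c * \<delta>))"
  unfolding upper_box_dim_def
  using Limsup_filtermap_eq[of "(*) c" "at_right 0" "box_ratio d E"] filtermap_times_at_right_0
  by (simp add: inj_on_def)

lemma lower_box_dim_rescale:
  "0 < c \<Longrightarrow> lower_box_dim d E = Liminf (at_right 0) (\<lambda>\<delta>. box_ratio d E (c * \<delta>))"
  unfolding lower_box_dim_def
  using Liminf_filtermap_eq[of "(*) c" "at_right 0" "box_ratio d E"] filtermap_times_at_right_0
  by (simp add: inj_on_def)

lemma lower_box_dim_eq_infinity:
  assumes "0 < \<delta>" "cover_num d \<delta> E = \<infinity>"
  shows "lower_box_dim d E = \<infinity>"
proof -
  have "\<forall>\<^sub>F \<delta>' in at_right 0. \<infinity> \<le> box_ratio d E \<delta>'"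
    unfolding eventually_at_right_field
    using assms cover_num_antimono[of _ \<delta> d E] by (intro exI[of _ \<delta>]) (auto simp: box_ratio_def)
  then have "\<infinity> \<le> lower_box_dim d E" unfolding lower_box_dim_def by (rule Liminf_bounded)
  then show ?thesis by simp
qed

lemma frequently_less_Limsup:
  fixes X :: "_ \<Rightarrow> _ :: complete_linorder"
  assumes "C < Limsup F X"
  shows "\<exists>\<^sub>F x in F. C < X x"
proof (rule ccontr)
  assume "\<not> ?thesis"
  then have "\<forall>\<^sub>F x in F. X x \<le> C" by (simp add: not_frequently not_less)
  then have "Limsup F X \<le> C" by (rule Limsup_bounded)
  with assms show False by simp
qed

lemma Limsup_ge_frequently:
  fixes X :: "_ \<Rightarrow> _ :: complete_linorder"
  assumes "\<exists>\<^sub>F x in F. C \<le> X x"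
  shows "C \<le> Limsup F X"
proof (rule ccontr)
  assume "\<not> ?thesis"
  then have "\<forall>\<^sub>F x in F. X x < C" by (intro Limsup_lessD) simp
  with assms have "\<exists>\<^sub>F x in F. C \<le> X x \<and> X x < C" by (rule frequently_eventually_frequently)
  then have "\<exists>\<^sub>F x in F. False" by (rule frequently_elim1) (blast dest: leD)
  then show False by simp
qed

lemma ereal_less_add_split:
  fixes a b :: ereal
  assumes "ereal r < a + b" "0 \<le> a" "0 \<le> b"
  obtains s t where "ereal s < a" "ereal t < b" "r < s + t"
proof (cases a)
  case (real x)
  show ?thesis
  proof (cases b)
    case (real y)
    define e where "e = (x + y - r) / 3"
    have "r < x + y" using assms(1) \<open>a = ereal x\<close> real by simp
    then have "0 < e" "r < (x - e) + (y - e)" unfolding e_def by (simp_all add: field_simps)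
    then show ?thesis using that[of "x - e" "y - e"] \<open>a = ereal x\<close> real by simp
  next
    case PInf
    then show ?thesis using that[of "x - 1" "r - x + 2"] \<open>a = ereal x\<close> by simp
  qed (use assms(3) in simp)
next
  case PInf
  moreover have "ereal (-1) < b" using assms(3) by (rule order.strict_trans2[rotated]) simp
  ultimately show ?thesis using that[of "r + 2" "-1"] by simp
qed (use assms(2) in simp)

section \<open>Separated grids in products\<close>

lemma succ_floor_le_cover_num:
  assumes "ereal a < cover_num d \<delta> E" "0 \<le> a"
  shows "ereal (real (nat \<lfloor>a\<rfloor> + 1)) \<le> cover_num d \<delta> E"
proof (cases "cover_num d \<delta> E = \<infinity>")
  case False
  then obtain n where n: "cover_num d \<delta> E = ereal (real n)" using cover_num_cases by blast
  then have "nat \<lfloor>a\<rfloor> < n" using assms by (simp add: nat_less_iff floor_less_iff)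
  then show ?thesis by (simp add: n)
qed simp

lemma cover_num_Sigma_ge:
  fixes A :: "'a::metric_space set" and G :: "('a \<times> 'b::metric_space) set"
  assumes "0 \<le> r" "0 \<le> a" "0 \<le> b"
    and A: "ereal a < cover_num dist (2 * r) A"
    and sections: "\<And>x. x \<in> A \<Longrightarrow> ereal b < cover_num dist (2 * r) (Pair x -` G)"
  shows "ereal (a * b) \<le> cover_num max_dist r G"
proof -
  define m1 where "m1 = nat \<lfloor>a\<rfloor> + 1"
  define m2 where "m2 = nat \<lfloor>b\<rfloor> + 1"
  obtain P1 where P1: "P1 \<subseteq> A" "finite P1" "card P1 = m1" "separated dist r P1"
    using exists_separated_subset[OF assms(1) succ_floor_le_cover_num[OF A assms(2)]]
    unfolding m1_def by blast
  have "\<forall>x\<in>A. \<exists>Q. Q \<subseteq> Pair x -` G \<and> finite Q \<and> card Q = m2 \<and> separated dist r Q"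
    using exists_separated_subset[OF assms(1) succ_floor_le_cover_num[OF sections assms(3)]]
    unfolding m2_def by blast
  from bchoice[OF this] obtain Q where Q: "\<And>x. x \<in> A \<Longrightarrow>
      Q x \<subseteq> Pair x -` G \<and> finite (Q x) \<and> card (Q x) = m2 \<and> separated dist r (Q x)"
    by blast
  have "separated max_dist r (Sigma P1 Q)"
    unfolding separated_def
  proof (intro ballI impI)
    fix p q assume "p \<in> Sigma P1 Q" "q \<in> Sigma P1 Q" "p \<noteq> q"
    then obtain x y x' y' where pq: "p = (x, y)" "q = (x', y')" "x \<in> P1" "x' \<in> P1"
      "y \<in> Q x" "y' \<in> Q x'" by blast
    show "r < max_dist p q"
    proof (cases "x = x'")
      case True
      then have "y \<noteq> y'" "y' \<in> Q x" using pq \<open>p \<noteq> q\<close> by auto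
      then have "r < dist y y'" using Q[of x] pq P1(1) unfolding separated_def by blast
      then show ?thesis by (simp add: pq max_dist_def)
    next
      case False
      then have "r < dist x x'" using P1(4) pq unfolding separated_def by blast
      then show ?thesis by (simp add: pq max_dist_def)
    qed
  qed
  moreover have "Sigma P1 Q \<subseteq> G" using P1(1) Q by blast
  moreover have "finite (Sigma P1 Q)" using P1 Q by blast
  ultimately have "ereal (real (card (Sigma P1 Q))) \<le> cover_num max_dist r G"
    by (intro card_le_cover_num)
  moreover have "card (Sigma P1 Q) = m1 * m2"
    using P1 Q by (simp add: card_SigmaI subset_eq)
  ultimately have "ereal (real m1 * real m2) \<le> cover_num max_dist r G" by simp
  moreover have "a * b \<le> real m1 * real m2"
    unfolding m1_def m2_def using assms(2,3) by (intro mult_mono) linarith+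
  ultimately show ?thesis by (simp add: order_trans[rotated])
qed

lemma eventually_box_ratio_Sigma_ge:
  fixes A :: "'a::metric_space set" and G :: "('a \<times> 'b::metric_space) set"
  assumes "0 < r" "r < s + t" "A \<noteq> {}" "\<And>x. x \<in> A \<Longrightarrow> Pair x -` G \<noteq> {}"
    and sections: "\<forall>\<^sub>F \<delta> in at_right 0. \<forall>x\<in>A. ereal t < box_ratio dist (Pair x -` G) \<delta>"
  shows "\<forall>\<^sub>F \<delta> in at_right 0. ereal s < box_ratio dist A (2 * \<delta>) \<longrightarrow> ereal r \<le> box_ratio max_dist G \<delta>"
proof -
  have "\<forall>\<^sub>F \<delta> in at_right 0. \<forall>x\<in>A. ereal t < box_ratio dist (Pair x -` G) (2 * \<delta>)"
    using sections filtermap_times_at_right_0[of 2] eventually_filtermap[of _ "(*) 2"] by force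
  moreover have "\<forall>\<^sub>F \<delta> in at_right (0::real). 0 < \<delta> \<and> 2 * \<delta> < 1"
    unfolding eventually_at_right_field by (intro exI[of _ "1/2"]) auto
  moreover note eventually_box_ratio_ge[OF assms(1,2), of max_dist G]
  ultimately show ?thesis
  proof eventually_elim
    case (elim \<delta>)
    show ?case
    proof
      assume "ereal s < box_ratio dist A (2 * \<delta>)"
      then have "ereal ((2 * \<delta>) powr (-s)) < cover_num dist (2 * \<delta>) A"
        using elim(2) assms(3) by (intro powr_less_cover_num) auto
      moreover have "ereal ((2 * \<delta>) powr (-t)) < cover_num dist (2 * \<delta>) (Pair x -` G)"
        if "x \<in> A" for x
        using elim(1,2) assms(4) that by (intro powr_less_cover_num) auto
      ultimately have "ereal ((2 * \<delta>) powr (-s) * (2 * \<delta>) powr (-t)) \<le> cover_num max_dist \<delta> G"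
        using elim(2) by (intro cover_num_Sigma_ge) auto
      then have "ereal ((2 * \<delta>) powr (- (s + t))) \<le> cover_num max_dist \<delta> G"
        by (simp add: powr_add[symmetric])
      then show "ereal r \<le> box_ratio max_dist G \<delta>" using elim(3) by blast
    qed
  qed
qed

section \<open>Product measurability on separable sets\<close>

lemma max_dist_le_dist: "max_dist p q \<le> dist p q"
  unfolding max_dist_def by (intro max.boundedI dist_fst_le dist_snd_le)

lemma dist_le_max_dist: "dist p q \<le> 2 * max_dist p q"
proof -
  have "dist p q = sqrt ((dist (fst p) (fst q))\<^sup>2 + (dist (snd p) (snd q))\<^sup>2)"
    using dist_Pair_Pair[of "fst p" "snd p" "fst q" "snd q"] by simp
  also have "\<dots> \<le> dist (fst p) (fst q) + dist (snd p) (snd q)" by (intro sqrt_sum_squares_le_sum) auto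
  also have "\<dots> \<le> 2 * max_dist p q" unfolding max_dist_def by linarith
  finally show ?thesis .
qed

lemma mem_cball_Times_cball: "z \<in> cball (fst p) r \<times> cball (snd p) r \<longleftrightarrow> max_dist p z \<le> r"
  unfolding max_dist_def by (cases z) (simp add: mem_cball)

lemma cball_Times_cball_in_sets_pair:
  fixes \<mu> :: "'a::metric_space measure" and \<nu> :: "'b::metric_space measure"
  assumes "sets \<mu> = sets borel" "sets \<nu> = sets borel"
  shows "cball a r \<times> cball b r \<in> sets (\<mu> \<Otimes>\<^sub>M \<nu>)"
  using assms by (intro pair_measureI) (simp_all add: borel_closed)

lemma closure_eq_INT_UN_cball_Times_cball:
  fixes D :: "('a::metric_space \<times> 'b::metric_space) set"
  shows "closure D = (\<Inter>j. \<Union>p\<in>D. cball (fst p) (1 / Suc j) \<times> cball (snd p) (1 / Suc j))"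
proof (intro equalityI subsetI)
  fix z assume z: "z \<in> closure D"
  show "z \<in> (\<Inter>j. \<Union>p\<in>D. cball (fst p) (1 / Suc j) \<times> cball (snd p) (1 / Suc j))"
  proof
    fix j
    have "0 < 1 / real (Suc j)" by simp
    then obtain p where p: "p \<in> D" "dist p z < 1 / Suc j" using z unfolding closure_approachable by blast
    then have "max_dist p z \<le> 1 / Suc j" using max_dist_le_dist[of p z] by linarith
    then show "z \<in> (\<Union>p\<in>D. cball (fst p) (1 / Suc j) \<times> cball (snd p) (1 / Suc j))"
      by (intro UN_I[OF p(1)]) (simp add: mem_cball_Times_cball)
  qed
next
  fix z assume z: "z \<in> (\<Inter>j. \<Union>p\<in>D. cball (fst p) (1 / Suc j) \<times> cball (snd p) (1 / Suc j))"
  show "z \<in> closure D"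
    unfolding closure_approachable
  proof (intro allI impI)
    fix e :: real assume "0 < e"
    then obtain j where "inverse (real (Suc j)) < e / 2" using reals_Archimedean half_gt_zero by blast
    then have j: "1 / real (Suc j) < e / 2" by (simp add: inverse_eq_divide)
    have "z \<in> (\<Union>p\<in>D. cball (fst p) (1 / Suc j) \<times> cball (snd p) (1 / Suc j))" using z by blast
    then obtain p where "p \<in> D" "max_dist p z \<le> 1 / Suc j"
      unfolding mem_cball_Times_cball[symmetric] by blast
    moreover from this have "dist p z < e" using dist_le_max_dist[of p z] j by linarith
    ultimately show "\<exists>p\<in>D. dist p z < e" by blast
  qed
qed

lemma closure_countable_in_sets_pair:
  fixes \<mu> :: "'a::metric_space measure" and \<nu> :: "'b::metric_space measure"
  assumes "sets \<mu> = sets borel" "sets \<nu> = sets borel" "countable D"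
  shows "closure D \<in> sets (\<mu> \<Otimes>\<^sub>M \<nu>)"
proof -
  have "UNIV \<in> sets (\<mu> \<Otimes>\<^sub>M \<nu>)"
    using sets.top[of "\<mu> \<Otimes>\<^sub>M \<nu>"] sets_eq_imp_space_eq[OF assms(1)] sets_eq_imp_space_eq[OF assms(2)]
    by (simp add: space_pair_measure)
  then show ?thesis
    unfolding closure_eq_INT_UN_cball_Times_cball
    by (intro sets.countable_INT'' sets.countable_UN'' cball_Times_cball_in_sets_pair assms) simp_all
qed

lemma open_Int_closure_countable_in_sets_pair:
  fixes \<mu> :: "'a::metric_space measure" and \<nu> :: "'b::metric_space measure"
  assumes "sets \<mu> = sets borel" "sets \<nu> = sets borel" "countable D" "open U"
  shows "U \<inter> closure D \<in> sets (\<mu> \<Otimes>\<^sub>M \<nu>)"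
proof -
  define R where "R (pq :: ('a \<times> 'b) \<times> real) = cball (fst (fst pq)) (snd pq) \<times> cball (snd (fst pq)) (snd pq)" for pq
  define I where "I = {pq \<in> D \<times> \<rat>. R pq \<subseteq> U}"
  have "countable I"
    unfolding I_def by (rule countable_subset[of _ "D \<times> \<rat>"]) (auto intro: assms(3) countable_rat)
  \<comment> \<open>Near a point of the separable set, U contains a square with centre in D and rational radius.\<close>
  have "U \<inter> closure D = (\<Union>pq\<in>I. R pq) \<inter> closure D"
  proof (intro equalityI subsetI)
    fix z assume z: "z \<in> U \<inter> closure D"
    obtain e where e: "0 < e" "ball z e \<subseteq> U" using z assms(4) openE by blast
    have "0 < e / 4" using e(1) by simp
    moreover have "z \<in> closure D" using z by blast
    ultimately obtain p where p: "p \<in> D" "dist p z < e / 4" unfolding closure_approachable by blast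
    obtain q where q: "q \<in> \<rat>" "e / 4 < q" "q < 3 * e / 8"
      using Rats_dense_in_real[of "e / 4" "3 * e / 8"] e(1) by auto
    have "R (p, q) \<subseteq> U"
    proof
      fix w assume "w \<in> R (p, q)"
      then have "max_dist p w \<le> q" unfolding R_def by (simp add: mem_cball_Times_cball)
      then have "dist z w < e"
        using dist_triangle[of z w p] dist_commute[of z p] dist_le_max_dist[of p w] p(2) q(3) by linarith
      then show "w \<in> U" using e(2) by auto
    qed
    moreover have "z \<in> R (p, q)"
      unfolding R_def using max_dist_le_dist[of p z] p(2) q(2) by (simp add: mem_cball_Times_cball)
    ultimately show "z \<in> (\<Union>pq\<in>I. R pq) \<inter> closure D" using p(1) q(1) z unfolding I_def by blast
  qed (auto simp: I_def)
  also have "\<dots> \<in> sets (\<mu> \<Otimes>\<^sub>M \<nu>)"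
    unfolding R_def using \<open>countable I\<close>
    by (intro sets.Int sets.countable_UN'' cball_Times_cball_in_sets_pair closure_countable_in_sets_pair assms)
  finally show ?thesis .
qed

lemma borel_Int_closure_countable_in_sets_pair:
  fixes \<mu> :: "'a::metric_space measure" and \<nu> :: "'b::metric_space measure"
  assumes "sets \<mu> = sets borel" "sets \<nu> = sets borel" "countable D" "B \<in> sets borel"
  shows "B \<inter> closure D \<in> sets (\<mu> \<Otimes>\<^sub>M \<nu>)"
proof -
  have "B \<in> sigma_sets UNIV {S. open S}" using assms(4) unfolding sets_borel .
  then show ?thesis
  proof induct
    case (Basic U)
    then show ?case using open_Int_closure_countable_in_sets_pair[OF assms(1-3)] by simp
  next
    case (Compl U)
    have "(UNIV - U) \<inter> closure D = closure D - U \<inter> closure D" by blast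
    then show ?case using Compl closure_countable_in_sets_pair[OF assms(1-3)] by simp
  next
    case (Union U)
    have "\<Union>(range U) \<inter> closure D = (\<Union>i. U i \<inter> closure D)" by blast
    then show ?case using Union(2) by (metis sets.countable_UN'' countableI_type)
  qed simp
qed

lemma exists_finite_net:
  assumes "cover_num d \<delta> E \<noteq> \<infinity>"
  shows "\<exists>F. finite F \<and> (\<forall>z\<in>E. \<exists>p\<in>F. d p z \<le> \<delta>)"
proof -
  have "{ereal (real (card C)) | C. finite C \<and> E \<subseteq> \<Union>C \<and> (\<forall>S\<in>C. diam_le d \<delta> S)} \<noteq> {}"
    using assms unfolding cover_num_def by (intro notI) (simp add: top_ereal_def)
  then obtain C where C: "finite C" "E \<subseteq> \<Union>C" "\<forall>S\<in>C. diam_le d \<delta> S" by blast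
  have "\<exists>p\<in>(\<lambda>S. SOME p. p \<in> S) ` C. d p z \<le> \<delta>" if "z \<in> E" for z
  proof -
    obtain S where S: "S \<in> C" "z \<in> S" using C(2) \<open>z \<in> E\<close> by blast
    then have "(SOME p. p \<in> S) \<in> S" by (intro someI)
    then show ?thesis using S C(3) unfolding diam_le_def by blast
  qed
  then show ?thesis using C(1) by blast
qed

lemma exists_countable_closure_superset:
  fixes Es :: "nat \<Rightarrow> ('a::metric_space \<times> 'b::metric_space) set"
  assumes "\<And>n \<delta>. 0 < \<delta> \<Longrightarrow> cover_num max_dist \<delta> (Es n) \<noteq> \<infinity>"
  shows "\<exists>D. countable D \<and> (\<Union>n. Es n) \<subseteq> closure D"
proof -
  have "\<forall>nj. \<exists>F. finite F \<and> (\<forall>z\<in>Es (fst nj). \<exists>p\<in>F. max_dist p z \<le> 1 / Suc (snd nj))"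
    using assms by (intro allI exists_finite_net) simp
  then obtain F where F: "\<And>nj. finite (F nj)"
    "\<And>n j z. z \<in> Es n \<Longrightarrow> \<exists>p\<in>F (n, j). max_dist p z \<le> 1 / Suc j"
    by (metis fst_conv snd_conv choice)
  have "(\<Union>n. Es n) \<subseteq> closure (\<Union>nj. F nj)"
  proof (clarify, unfold closure_approachable, intro allI impI)
    fix n z and e :: real assume "z \<in> Es n" "0 < e"
    obtain j where "inverse (real (Suc j)) < e / 2" using reals_Archimedean half_gt_zero \<open>0 < e\<close> by blast
    then have j: "1 / real (Suc j) < e / 2" by (simp add: inverse_eq_divide)
    obtain p where "p \<in> F (n, j)" "max_dist p z \<le> 1 / Suc j" using F(2) \<open>z \<in> Es n\<close> by blast
    moreover from this have "dist p z < e" using dist_le_max_dist[of p z] j by linarith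
    ultimately show "\<exists>p\<in>(\<Union>nj. F nj). dist p z < e" by blast
  qed
  moreover have "countable (\<Union>nj. F nj)" using F(1) by (simp add: countable_finite)
  ultimately show ?thesis by blast
qed

lemma obtain_positive_piece:
  fixes \<mu> :: "'a::metric_space measure" and \<nu> :: "'b::metric_space measure"
    and Es :: "nat \<Rightarrow> ('a \<times> 'b) set"
  assumes "sets \<mu> = sets borel" "sets \<nu> = sets borel"
    and E: "E \<in> sets borel" "0 < outer_measure_of (\<mu> \<Otimes>\<^sub>M \<nu>) E" "E \<subseteq> (\<Union>n. Es n)"
    and bounded: "\<And>n \<delta>. 0 < \<delta> \<Longrightarrow> cover_num max_dist \<delta> (Es n) \<noteq> \<infinity>"
  obtains n where "E \<inter> closure (Es n) \<in> sets (\<mu> \<Otimes>\<^sub>M \<nu>)" "0 < emeasure (\<mu> \<Otimes>\<^sub>M \<nu>) (E \<inter> closure (Es n))"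
proof -
  have "\<exists>D. countable D \<and> (\<Union>n. Es n) \<subseteq> closure D"
    using bounded by (rule exists_countable_closure_superset)
  then obtain D where D: "countable D" "(\<Union>n. Es n) \<subseteq> closure D" by (elim exE conjE)
  \<comment> \<open>E need not lie in the product \<sigma>-algebra, but its part inside the separable set closure D does.\<close>
  have sets: "B \<inter> E \<in> sets (\<mu> \<Otimes>\<^sub>M \<nu>)" if "B \<in> sets borel" for B
  proof -
    have "B \<inter> E \<in> sets borel" using that E(1) by (rule sets.Int)
    then have "B \<inter> E \<inter> closure D \<in> sets (\<mu> \<Otimes>\<^sub>M \<nu>)"
      using assms(1,2) D(1) by (intro borel_Int_closure_countable_in_sets_pair)
    moreover have "B \<inter> E \<inter> closure D = B \<inter> E" using E(3) D(2) by blast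
    ultimately show ?thesis by simp
  qed
  have pieces: "E \<inter> closure (Es n) \<in> sets (\<mu> \<Otimes>\<^sub>M \<nu>)" for n
    using sets[of "closure (Es n)"] by (simp add: Int_commute borel_closed)
  have E_eq: "E = (\<Union>n. E \<inter> closure (Es n))" using E(3) closure_subset by blast
  have "\<exists>n. 0 < emeasure (\<mu> \<Otimes>\<^sub>M \<nu>) (E \<inter> closure (Es n))"
  proof (rule ccontr)
    assume "\<nexists>n. 0 < emeasure (\<mu> \<Otimes>\<^sub>M \<nu>) (E \<inter> closure (Es n))"
    then have "emeasure (\<mu> \<Otimes>\<^sub>M \<nu>) (\<Union>n. E \<inter> closure (Es n)) = 0"
      using pieces by (intro emeasure_UN_eq_0) (auto simp: not_less)
    then show False using E(2) sets[of UNIV] E_eq by simp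
  qed
  then show ?thesis using that pieces by blast
qed

section \<open>Sections of product sets\<close>

lemma obtain_positive_sections:
  assumes "sigma_finite_measure \<nu>" "G \<in> sets (\<mu> \<Otimes>\<^sub>M \<nu>)" "0 < emeasure (\<mu> \<Otimes>\<^sub>M \<nu>) G"
  obtains A where "A \<in> sets \<mu>" "0 < emeasure \<mu> A" "\<And>x. x \<in> A \<Longrightarrow> 0 < emeasure \<nu> (Pair x -` G)"
proof -
  define A where "A = {x\<in>space \<mu>. emeasure \<nu> (Pair x -` G) \<noteq> 0}"
  have meas: "(\<lambda>x. emeasure \<nu> (Pair x -` G)) \<in> borel_measurable \<mu>"
    using assms(1,2) by (rule sigma_finite_measure.measurable_emeasure_Pair)
  then have A: "A \<in> sets \<mu>" unfolding A_def by measurable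
  have "emeasure (\<mu> \<Otimes>\<^sub>M \<nu>) G = (\<integral>\<^sup>+x. emeasure \<nu> (Pair x -` G) \<partial>\<mu>)"
    using assms(1,2) by (rule sigma_finite_measure.emeasure_pair_measure_alt)
  then have "\<not> (AE x in \<mu>. emeasure \<nu> (Pair x -` G) = 0)"
    using assms(3) nn_integral_0_iff_AE[OF meas] by auto
  then have "emeasure \<mu> A \<noteq> 0" using AE_iff_measurable[OF A] A_def by auto
  then show ?thesis using that A by (auto simp: A_def zero_less_iff_neq_zero)
qed

lemma obtain_uniformly_eventually_subset:
  assumes "A \<subseteq> space M" "0 < outer_measure_of M A"
    and "\<And>x. x \<in> A \<Longrightarrow> \<forall>\<^sub>F \<delta> in at_right (0::real). P x \<delta>"
  obtains B where "B \<subseteq> A" "0 < outer_measure_of M B" "\<forall>\<^sub>F \<delta> in at_right 0. \<forall>x\<in>B. P x \<delta>"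
proof -
  define B where "B k = {x\<in>A. \<forall>\<delta>. 0 < \<delta> \<and> \<delta> < 1 / real (Suc k) \<longrightarrow> P x \<delta>}" for k
  have "1 / real (Suc (Suc k)) \<le> 1 / real (Suc k)" for k by (simp add: frac_le)
  then have "incseq B" unfolding B_def by (intro incseq_SucI) (auto intro: less_le_trans)
  moreover have "(\<Union>k. B k) = A"
  proof (intro equalityI subsetI)
    fix x assume "x \<in> A"
    then obtain \<epsilon> where \<epsilon>: "0 < \<epsilon>" "\<forall>\<delta>. 0 < \<delta> \<and> \<delta> < \<epsilon> \<longrightarrow> P x \<delta>"
      using assms(3) unfolding eventually_at_right_field by blast
    obtain k where "inverse (real (Suc k)) < \<epsilon>" using reals_Archimedean \<epsilon>(1) by blast
    then have "x \<in> B k" using \<epsilon>(2) \<open>x \<in> A\<close> unfolding B_def by (auto simp: inverse_eq_divide)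
    then show "x \<in> (\<Union>k. B k)" by blast
  qed (auto simp: B_def)
  ultimately have "(SUP k. outer_measure_of M (B k)) = outer_measure_of M A"
    using assms(1) SUP_outer_measure_of_incseq[of B M] by (auto simp: B_def)
  with assms(2) have "0 < (SUP k. outer_measure_of M (B k))" by simp
  then obtain k where "0 < outer_measure_of M (B k)" by (auto simp: less_SUP_iff)
  moreover have "\<forall>\<^sub>F \<delta> in at_right 0. \<forall>x\<in>B k. P x \<delta>"
    unfolding eventually_at_right_field B_def by (intro exI[of _ "1 / real (Suc k)"]) auto
  ultimately show ?thesis using that[of "B k"] by (auto simp: B_def)
qed

lemma measure_dim_le:
  "E \<in> sets borel \<Longrightarrow> 0 < outer_measure_of M E \<Longrightarrow> measure_dim dimf M \<le> dimf E"
  unfolding measure_dim_def by (rule Inf_lower) blast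

lemma packing_dim_le_upper_box_dim: "packing_dim d E \<le> upper_box_dim d E"
  unfolding packing_dim_def by (intro Inf_lower CollectI exI[of _ "\<lambda>n::nat. E"]) simp

lemma lower_packing_dim_le_lower_box_dim: "lower_packing_dim d E \<le> lower_box_dim d E"
  unfolding lower_packing_dim_def by (intro Inf_lower CollectI exI[of _ "\<lambda>n::nat. E"]) simp

lemma packing_dim_nonneg: "0 \<le> packing_dim d E"
  unfolding packing_dim_def by (intro Inf_greatest) (auto intro: SUP_upper2 upper_box_dim_nonneg)

lemma lower_packing_dim_nonneg: "0 \<le> lower_packing_dim d E"
  unfolding lower_packing_dim_def by (intro Inf_greatest) (auto intro: SUP_upper2 lower_box_dim_nonneg)

lemma measure_dim_nonneg: "(\<And>E. 0 \<le> dimf E) \<Longrightarrow> 0 \<le> measure_dim dimf M"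
  unfolding measure_dim_def by (intro Inf_greatest) auto

lemma cover_num_dist_closure: "cover_num dist \<delta> (closure E) \<le> cover_num dist \<delta> (E :: 'a::metric_space set)"
  by (rule cover_num_closure) (intro continuous_intros)

lemma cover_num_max_dist_closure:
  "cover_num max_dist \<delta> (closure E) \<le> cover_num max_dist \<delta> (E :: ('a::metric_space \<times> 'b::metric_space) set)"
  unfolding max_dist_def by (rule cover_num_closure[unfolded max_dist_def]) (intro continuous_intros)

lemma measure_dim_packing_le_upper_box_dim:
  fixes \<mu> :: "'a::metric_space measure"
  assumes "0 < outer_measure_of \<mu> A"
  shows "measure_dim (packing_dim dist) \<mu> \<le> upper_box_dim dist A"
proof -
  have "0 < outer_measure_of \<mu> (closure A)"
    using assms outer_measure_of_mono[OF closure_subset, of \<mu> A] by simp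
  then have "measure_dim (packing_dim dist) \<mu> \<le> packing_dim dist (closure A)"
    by (intro measure_dim_le) (simp_all add: borel_closed)
  also have "\<dots> \<le> upper_box_dim dist (closure A)" by (rule packing_dim_le_upper_box_dim)
  also have "\<dots> \<le> upper_box_dim dist A" using cover_num_dist_closure by (rule upper_box_dim_mono)
  finally show ?thesis .
qed

lemma measure_dim_lower_packing_le_lower_box_dim:
  fixes \<mu> :: "'a::metric_space measure"
  assumes "0 < outer_measure_of \<mu> A"
  shows "measure_dim (lower_packing_dim dist) \<mu> \<le> lower_box_dim dist A"
proof -
  have "0 < outer_measure_of \<mu> (closure A)"
    using assms outer_measure_of_mono[OF closure_subset, of \<mu> A] by simp
  then have "measure_dim (lower_packing_dim dist) \<mu> \<le> lower_packing_dim dist (closure A)"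
    by (intro measure_dim_le) (simp_all add: borel_closed)
  also have "\<dots> \<le> lower_box_dim dist (closure A)" by (rule lower_packing_dim_le_lower_box_dim)
  also have "\<dots> \<le> lower_box_dim dist A" using cover_num_dist_closure by (rule lower_box_dim_mono)
  finally show ?thesis .
qed

lemma obtain_product_box_ratio_bound:
  fixes \<mu> :: "'a::metric_space measure" and \<nu> :: "'b::metric_space measure"
    and Es :: "nat \<Rightarrow> ('a \<times> 'b) set"
  assumes sets: "sets \<mu> = sets borel" "sets \<nu> = sets borel" and "sigma_finite_measure \<nu>"
    and E: "E \<in> sets borel" "0 < outer_measure_of (\<mu> \<Otimes>\<^sub>M \<nu>) E" "E \<subseteq> (\<Union>n. Es n)"
    and bounded: "\<And>n \<delta>. 0 < \<delta> \<Longrightarrow> cover_num max_dist \<delta> (Es n) \<noteq> \<infinity>"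
    and t: "ereal t < measure_dim (lower_packing_dim dist) \<nu>"
    and r: "0 < r" "r < s + t"
  obtains n A where "0 < outer_measure_of \<mu> A"
    "\<forall>\<^sub>F \<delta> in at_right 0. ereal s < box_ratio dist A (2 * \<delta>) \<longrightarrow> ereal r \<le> box_ratio max_dist (Es n) \<delta>"
proof -
  obtain n where G: "E \<inter> closure (Es n) \<in> sets (\<mu> \<Otimes>\<^sub>M \<nu>)" "0 < emeasure (\<mu> \<Otimes>\<^sub>M \<nu>) (E \<inter> closure (Es n))"
    using obtain_positive_piece[OF sets E bounded] by blast
  define G where "G = E \<inter> closure (Es n)"
  obtain A0 where A0: "A0 \<in> sets \<mu>" "0 < emeasure \<mu> A0" "\<And>x. x \<in> A0 \<Longrightarrow> 0 < emeasure \<nu> (Pair x -` G)"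
    using obtain_positive_sections[OF assms(3) G[folded G_def]] by blast
  have sections: "\<forall>\<^sub>F \<delta> in at_right 0. ereal t < box_ratio dist (Pair x -` G) \<delta>" if "x \<in> A0" for x
  proof -
    have "Pair x -` G \<in> sets \<nu>" using G(1) unfolding G_def by (rule sets_Pair1)
    then have "measure_dim (lower_packing_dim dist) \<nu> \<le> lower_packing_dim dist (Pair x -` G)"
      using A0(3)[OF that] sets(2) by (intro measure_dim_le) simp_all
    also have "\<dots> \<le> lower_box_dim dist (Pair x -` G)" by (rule lower_packing_dim_le_lower_box_dim)
    finally show ?thesis using t unfolding lower_box_dim_def by (intro less_LiminfD) simp
  qed
  have "A0 \<subseteq> space \<mu>" "0 < outer_measure_of \<mu> A0" using A0(1,2) by (simp_all add: sets.sets_into_space)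
  then obtain A where A: "A \<subseteq> A0" "0 < outer_measure_of \<mu> A"
    "\<forall>\<^sub>F \<delta> in at_right 0. \<forall>x\<in>A. ereal t < box_ratio dist (Pair x -` G) \<delta>"
    using sections by (rule obtain_uniformly_eventually_subset)
  have "A \<noteq> {}" using A(2) by auto
  moreover have "Pair x -` G \<noteq> {}" if "x \<in> A" for x
  proof -
    have "0 < emeasure \<nu> (Pair x -` G)" using A0(3) A(1) that by blast
    then show ?thesis by auto
  qed
  ultimately have estimate: "\<forall>\<^sub>F \<delta> in at_right 0. ereal s < box_ratio dist A (2 * \<delta>) \<longrightarrow> ereal r \<le> box_ratio max_dist G \<delta>"
    using r A(3) by (intro eventually_box_ratio_Sigma_ge)
  have mono: "box_ratio max_dist G \<delta> \<le> box_ratio max_dist (Es n) \<delta>" for \<delta>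
  proof (rule box_ratio_mono)
    have "cover_num max_dist \<delta> G \<le> cover_num max_dist \<delta> (closure (Es n))"
      unfolding G_def by (intro cover_num_mono) blast
    also have "\<dots> \<le> cover_num max_dist \<delta> (Es n)" by (rule cover_num_max_dist_closure)
    finally show "cover_num max_dist \<delta> G \<le> cover_num max_dist \<delta> (Es n)" .
  qed
  from estimate have "\<forall>\<^sub>F \<delta> in at_right 0.
      ereal s < box_ratio dist A (2 * \<delta>) \<longrightarrow> ereal r \<le> box_ratio max_dist (Es n) \<delta>"
    by (rule eventually_mono) (use mono in \<open>blast intro: order_trans\<close>)
  then show ?thesis using that A(2) by blast
qed

lemma exists_piece_upper_box_dim_ge:
  fixes \<mu> :: "'a::metric_space measure" and \<nu> :: "'b::metric_space measure"
    and Es :: "nat \<Rightarrow> ('a \<times> 'b) set"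
  assumes sets: "sets \<mu> = sets borel" "sets \<nu> = sets borel" and "sigma_finite_measure \<nu>"
    and E: "E \<in> sets borel" "0 < outer_measure_of (\<mu> \<Otimes>\<^sub>M \<nu>) E" "E \<subseteq> (\<Union>n. Es n)"
    and r: "0 < r" "ereal r < measure_dim (packing_dim dist) \<mu> + measure_dim (lower_packing_dim dist) \<nu>"
  shows "\<exists>n. ereal r \<le> upper_box_dim max_dist (Es n)"
proof (cases "\<exists>n \<delta>. 0 < \<delta> \<and> cover_num max_dist \<delta> (Es n) = \<infinity>")
  case True
  then obtain n \<delta> where "0 < \<delta>" "cover_num max_dist \<delta> (Es n) = \<infinity>" by blast
  then have "lower_box_dim max_dist (Es n) = \<infinity>" by (rule lower_box_dim_eq_infinity)
  then have "upper_box_dim max_dist (Es n) = \<infinity>"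
    using lower_box_dim_le_upper_box_dim[of max_dist "Es n"] by simp
  then show ?thesis by (intro exI[of _ n]) simp
next
  case False
  obtain s t where st: "ereal s < measure_dim (packing_dim dist) \<mu>"
    "ereal t < measure_dim (lower_packing_dim dist) \<nu>" "r < s + t"
    using r(2) by (rule ereal_less_add_split) (intro measure_dim_nonneg packing_dim_nonneg lower_packing_dim_nonneg)+
  obtain n A where A: "0 < outer_measure_of \<mu> A"
    "\<forall>\<^sub>F \<delta> in at_right 0. ereal s < box_ratio dist A (2 * \<delta>) \<longrightarrow> ereal r \<le> box_ratio max_dist (Es n) \<delta>"
    using obtain_product_box_ratio_bound[OF sets assms(3) E _ st(2) r(1) st(3)] False by blast
  have "ereal s < upper_box_dim dist A"
    using st(1) measure_dim_packing_le_upper_box_dim[OF A(1)] by (rule order.strict_trans2)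
  then have "ereal s < Limsup (at_right 0) (\<lambda>\<delta>. box_ratio dist A (2 * \<delta>))"
    by (simp add: upper_box_dim_rescale[of 2])
  then have "\<exists>\<^sub>F \<delta> in at_right 0. ereal s < box_ratio dist A (2 * \<delta>)" by (rule frequently_less_Limsup)
  then have "\<exists>\<^sub>F \<delta> in at_right 0. ereal r \<le> box_ratio max_dist (Es n) \<delta>" using A(2) by (rule frequently_rev_mp)
  then show ?thesis unfolding upper_box_dim_def by (blast intro: Limsup_ge_frequently)
qed

lemma exists_piece_lower_box_dim_ge:
  fixes \<mu> :: "'a::metric_space measure" and \<nu> :: "'b::metric_space measure"
    and Es :: "nat \<Rightarrow> ('a \<times> 'b) set"
  assumes sets: "sets \<mu> = sets borel" "sets \<nu> = sets borel" and "sigma_finite_measure \<nu>"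
    and E: "E \<in> sets borel" "0 < outer_measure_of (\<mu> \<Otimes>\<^sub>M \<nu>) E" "E \<subseteq> (\<Union>n. Es n)"
    and r: "0 < r" "ereal r < measure_dim (lower_packing_dim dist) \<mu> + measure_dim (lower_packing_dim dist) \<nu>"
  shows "\<exists>n. ereal r \<le> lower_box_dim max_dist (Es n)"
proof (cases "\<exists>n \<delta>. 0 < \<delta> \<and> cover_num max_dist \<delta> (Es n) = \<infinity>")
  case True
  then obtain n \<delta> where "0 < \<delta>" "cover_num max_dist \<delta> (Es n) = \<infinity>" by blast
  then have "lower_box_dim max_dist (Es n) = \<infinity>" by (rule lower_box_dim_eq_infinity)
  then show ?thesis by (intro exI[of _ n]) simp
next
  case False
  obtain s t where st: "ereal s < measure_dim (lower_packing_dim dist) \<mu>"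
    "ereal t < measure_dim (lower_packing_dim dist) \<nu>" "r < s + t"
    using r(2) by (rule ereal_less_add_split) (intro measure_dim_nonneg lower_packing_dim_nonneg)+
  obtain n A where A: "0 < outer_measure_of \<mu> A"
    "\<forall>\<^sub>F \<delta> in at_right 0. ereal s < box_ratio dist A (2 * \<delta>) \<longrightarrow> ereal r \<le> box_ratio max_dist (Es n) \<delta>"
    using obtain_product_box_ratio_bound[OF sets assms(3) E _ st(2) r(1) st(3)] False by blast
  have "ereal s < lower_box_dim dist A"
    using st(1) measure_dim_lower_packing_le_lower_box_dim[OF A(1)] by (rule order.strict_trans2)
  then have "ereal s < Liminf (at_right 0) (\<lambda>\<delta>. box_ratio dist A (2 * \<delta>))"
    by (simp add: lower_box_dim_rescale[of 2])
  then have "\<forall>\<^sub>F \<delta> in at_right 0. ereal s < box_ratio dist A (2 * \<delta>)" by (rule less_LiminfD)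
  then have "\<forall>\<^sub>F \<delta> in at_right 0. ereal r \<le> box_ratio max_dist (Es n) \<delta>" using A(2) by (rule eventually_mp[rotated])
  then show ?thesis unfolding lower_box_dim_def by (blast intro: Liminf_bounded)
qed

lemma le_measure_dim_of_covers:
  fixes f :: "'a::topological_space set \<Rightarrow> ereal"
  assumes dimf: "\<And>E. dimf E = Inf {(SUP n. f (Es n)) | Es :: nat \<Rightarrow> 'a set. E \<subseteq> (\<Union>n. Es n)}"
    and nonneg: "\<And>E. 0 \<le> f E"
    and covers: "\<And>E (Es :: nat \<Rightarrow> 'a set) r. E \<in> sets borel \<Longrightarrow> 0 < outer_measure_of M E \<Longrightarrow> E \<subseteq> (\<Union>n. Es n) \<Longrightarrow>
      0 < r \<Longrightarrow> ereal r < c \<Longrightarrow> \<exists>n. ereal r \<le> f (Es n)"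
  shows "c \<le> measure_dim dimf M"
  unfolding measure_dim_def
proof (rule Inf_greatest, clarify)
  fix E assume E: "E \<in> sets borel" "0 < outer_measure_of M E"
  show "c \<le> dimf E" unfolding dimf
  proof (rule Inf_greatest, clarify)
    fix Es :: "nat \<Rightarrow> 'a set" assume cov: "E \<subseteq> (\<Union>n. Es n)"
    show "c \<le> (SUP n. f (Es n))"
    proof (rule dense_le)
      fix y assume "y < c"
      show "y \<le> (SUP n. f (Es n))"
      proof (cases "y \<le> 0")
        case True
        then show ?thesis using nonneg[of "Es 0"] by (blast intro: SUP_upper2 order_trans)
      next
        case False
        with \<open>y < c\<close> obtain r where "y = ereal r" "0 < r" by (cases y) auto
        then obtain n where "ereal r \<le> f (Es n)" using covers[of E Es r] E cov \<open>y < c\<close> by blast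
        then show ?thesis using \<open>y = ereal r\<close> by (blast intro: SUP_upper2)
      qed
    qed
  qed
qed

theorem theorem6p8:
  fixes \<mu> :: "'a::metric_space measure" and \<nu> :: "'b::metric_space measure"
  assumes "sets \<mu> = sets borel" and "finite_measure \<mu>"
    and "sets \<nu> = sets borel" and "finite_measure \<nu>"
  shows "measure_dim (packing_dim max_dist) (\<mu> \<Otimes>\<^sub>M \<nu>)
           \<ge> measure_dim (packing_dim dist) \<mu> + measure_dim (lower_packing_dim dist) \<nu>
         \<and> measure_dim (lower_packing_dim max_dist) (\<mu> \<Otimes>\<^sub>M \<nu>)
           \<ge> measure_dim (lower_packing_dim dist) \<mu> + measure_dim (lower_packing_dim dist) \<nu>"
proof -
  have "sigma_finite_measure \<nu>" using assms(4) by (rule finite_measure.axioms(1))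
  note covers = exists_piece_upper_box_dim_ge[OF assms(1,3) this] exists_piece_lower_box_dim_ge[OF assms(1,3) this]
  show ?thesis
    by (intro conjI le_measure_dim_of_covers[OF packing_dim_def upper_box_dim_nonneg covers(1)]
        le_measure_dim_of_covers[OF lower_packing_dim_def lower_box_dim_nonneg covers(2)])
qed

end
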